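(* Let $\Gamma$ be a gain operator on $\ell^\infty_+(\mathcal I)$ and $\hat\Gamma(s):=s\oplus\Gamma(s)$. The following are equivalent: (a) the system $\Sigma(\hat\Gamma)$ is UGS; (b) there exists a path $\sigma:\mathbb R_+\to\ell^\infty_+(\mathcal I)$ with $\sigma(r)\in\Psi(\Gamma)$ for all $r\ge0$, with $\varphi_{\min}(r)\mathbf 1\le\sigma(r)\le\varphi_{\max}(r)\mathbf 1$ for all $r\ge 0$ for some $\varphi_{\min},\varphi_{\max}\in\mathcal K_\infty$, and which is increasing; (c) there exists a path $\sigma:\mathbb R_+\to\ell^\infty_+(\mathcal I)$ with $\sigma(r)\in\Psi(\Gamma)$ for all $r\ge0$ and $\varphi_{\min}(r)\mathbf 1\le\sigma(r)\le\varphi_{\max}(r)\mathbf 1$ for all $r\ge0$ for some $\varphi_{\min},\varphi_{\max}\in\mathcal K_\infty$; (d) the set $\Psi(\Gamma)$ is uniformly cofinal.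
   Context: Let $\mathcal I$ be a nonempty countable index set. $\ell^\infty(\mathcal I)$ is the Banach space of real families $s=(s_i)_{i\in\mathcal I}$ with $\|s\|:=\sup_i|s_i|<\infty$, and $\ell^\infty_+(\mathcal I):=\{s:s_i\ge0\ \forall i\}$. $s^1\le s^2$ means $s^1_i\le s^2_i$ for all $i$; $\mathbf 1$ is the all-ones vector; $s^1\oplus s^2$ is the componentwise maximum. $\mathcal K$: continuous strictly increasing $\gamma:\mathbb R_+\to\mathbb R_+$ with $\gamma(0)=0$; $\mathcal K_\infty$: unbounded elements of $\mathcal K$. For $\mathcal J\subset\mathcal I$, $s_{|\mathcal J}$ agrees with $s$ on $\mathcal J$ and is $0$ elsewhere. Gain operator: for each $i$ a finite (possibly empty) $\mathcal I_i\subset\mathcal I\setminus\{i\}$; graph $\mathcal G$ with vertices $\mathcal I$ and edges $ji$, $j\in\mathcal I_i$; a pointwise equicontinuous family $\gamma_{ij}\in\mathcal K_\infty$ ($ji\in E(\mathcal G)$); functions $\mu_i:\ell^\infty_+(\mathcal I)\to[0,\infty]$ with (M1) some $\xi\in\mathcal K_\infty$ has $\mu_i(0)=0$, $\mu_i(s)\ge\xi(\|s\|)$; (M2) $\mu_i$ monotone w.r.t. $\le$; (M3) for each finite $\mathcal J$, $\mu_i$ restricted to vectors vanishing off $\mathcal J$ is finite-valued and continuous; (M4) for each norm-bounded $A$ and $\varepsilon>0$ there is $\delta>0$ with $\sup_i|\mu_i(s_{|\mathcal I_i})-\mu_i(s^0_{|\mathcal I_i})|\le\varepsilon$ whenever $s^0\in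 A$, $\|s-s^0\|\le\delta$. Then $\Gamma_i(s):=\mu_i([\gamma_{ij}(s_j)]_{j\in\mathcal I_i})$ (argument zero outside $\mathcal I_i$). For a monotone $T:\ell^\infty_+(\mathcal I)\to\ell^\infty_+(\mathcal I)$ with $T(0)=0$, $\Sigma(T)$ is the system $s^{n+1}=T(s^n)$; it is UGS if there is $\varphi\in\mathcal K_\infty$ with $\|T^n(s)\|\le\varphi(\|s\|)$ for all $s$, $n\ge0$. $\Psi(T):=\{s\in\ell^\infty_+(\mathcal I):T(s)\le s\}$. A set $A\subset\ell^\infty_+(\mathcal I)$ is uniformly cofinal if there is $\varphi\in\mathcal K_\infty$ such that every $s\in\ell^\infty_+(\mathcal I)$ has some $\hat s\in A$ with $s\le\hat s$ and $\|\hat s\|\le\varphi(\|s\|)$. A path $\sigma$ is increasing if $r_1\le r_2\Rightarrow\sigma(r_1)\le\sigma(r_2)$. *)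

theory Defs
  imports "HOL-Analysis.Analysis" "HOL-Library.Extended_Real"
begin

definition linf_plus :: "('i \<Rightarrow> real) set" where
  "linf_plus = {s. bdd_above (range (\<lambda>i. \<bar>s i\<bar>)) \<and> (\<forall>i. 0 \<le> s i)}"

definition supnorm :: "('i \<Rightarrow> real) \<Rightarrow> real" where
  "supnorm s = (SUP i. \<bar>s i\<bar>)"

definition vle :: "('i \<Rightarrow> real) \<Rightarrow> ('i \<Rightarrow> real) \<Rightarrow> bool" where
  "vle s1 s2 \<longleftrightarrow> (\<forall>i. s1 i \<le> s2 i)"

definition vmax :: "('i \<Rightarrow> real) \<Rightarrow> ('i \<Rightarrow> real) \<Rightarrow> ('i \<Rightarrow> real)" where
  "vmax s1 s2 = (\<lambda>i. max (s1 i) (s2 i))"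

definition restr :: "('i \<Rightarrow> real) \<Rightarrow> 'i set \<Rightarrow> ('i \<Rightarrow> real)" where
  "restr s J = (\<lambda>i. if i \<in> J then s i else 0)"

definition class_K :: "(real \<Rightarrow> real) \<Rightarrow> bool" where
  "class_K g \<longleftrightarrow> g 0 = 0 \<and> continuous_on {0..} g \<and> strict_mono_on {0..} g
     \<and> (\<forall>r\<ge>0. 0 \<le> g r)"

definition class_Kinf :: "(real \<Rightarrow> real) \<Rightarrow> bool" where
  "class_Kinf g \<longleftrightarrow> class_K g \<and> (\<forall>M. \<exists>r\<ge>0. M < g r)"

definition gain_data ::
  "('i \<Rightarrow> 'i set) \<Rightarrow> ('i \<Rightarrow> 'i \<Rightarrow> real \<Rightarrow> real) \<Rightarrow> ('i \<Rightarrow> ('i \<Rightarrow> real) \<Rightarrow> ereal) \<Rightarrow> bool" where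
  "gain_data Ii gam mu \<longleftrightarrow>
     (\<forall>i. finite (Ii i) \<and> i \<notin> Ii i)
   \<and> (\<forall>i. \<forall>j\<in>Ii i. class_Kinf (gam i j))
   \<comment> \<open>pointwise equicontinuity of the family of gains\<close>
   \<and> (\<forall>r\<ge>0. \<forall>\<epsilon>>0. \<exists>\<delta>>0. \<forall>i. \<forall>j\<in>Ii i. \<forall>r'\<ge>0.
         \<bar>r' - r\<bar> \<le> \<delta> \<longrightarrow> \<bar>gam i j r' - gam i j r\<bar> \<le> \<epsilon>)
   \<comment> \<open>values in [0, infinity]\<close>
   \<and> (\<forall>i. \<forall>s\<in>linf_plus. 0 \<le> mu i s)
   \<comment> \<open>(M1)\<close>
   \<and> (\<exists>\<xi>. class_Kinf \<xi> \<and> (\<forall>i. mu i (\<lambda>_. 0) = 0 \<and>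
         (\<forall>s\<in>linf_plus. ereal (\<xi> (supnorm s)) \<le> mu i s)))
   \<comment> \<open>(M2)\<close>
   \<and> (\<forall>i. \<forall>s1\<in>linf_plus. \<forall>s2\<in>linf_plus. vle s1 s2 \<longrightarrow> mu i s1 \<le> mu i s2)
   \<comment> \<open>(M3)\<close>
   \<and> (\<forall>i J. finite J \<longrightarrow>
         (\<forall>s\<in>linf_plus. (\<forall>j. j \<notin> J \<longrightarrow> s j = 0) \<longrightarrow> mu i s \<noteq> \<infinity>)
       \<and> (\<forall>s0\<in>linf_plus. (\<forall>j. j \<notin> J \<longrightarrow> s0 j = 0) \<longrightarrow>
            (\<forall>\<epsilon>>0. \<exists>\<delta>>0. \<forall>s\<in>linf_plus. (\<forall>j. j \<notin> J \<longrightarrow> s j = 0) \<longrightarrow>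
               supnorm (\<lambda>k. s k - s0 k) < \<delta> \<longrightarrow>
               \<bar>real_of_ereal (mu i s) - real_of_ereal (mu i s0)\<bar> < \<epsilon>)))
   \<comment> \<open>(M4)\<close>
   \<and> (\<forall>A. A \<subseteq> linf_plus \<longrightarrow> bdd_above (supnorm ` A) \<longrightarrow>
        (\<forall>\<epsilon>>0. \<exists>\<delta>>0. \<forall>s0\<in>A. \<forall>s\<in>linf_plus.
            supnorm (\<lambda>k. s k - s0 k) \<le> \<delta> \<longrightarrow>
            (\<forall>i. \<bar>real_of_ereal (mu i (restr s (Ii i))) - real_of_ereal (mu i (restr s0 (Ii i)))\<bar> \<le> \<epsilon>)))"

definition gain_op ::
  "('i \<Rightarrow> 'i set) \<Rightarrow> ('i \<Rightarrow> 'i \<Rightarrow> real \<Rightarrow> real) \<Rightarrow> ('i \<Rightarrow> ('i \<Rightarrow> real) \<Rightarrow> ereal)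
   \<Rightarrow> ('i \<Rightarrow> real) \<Rightarrow> ('i \<Rightarrow> real)" where
  "gain_op Ii gam mu s = (\<lambda>i. real_of_ereal (mu i (\<lambda>j. if j \<in> Ii i then gam i j (s j) else 0)))"

definition UGS :: "(('i \<Rightarrow> real) \<Rightarrow> ('i \<Rightarrow> real)) \<Rightarrow> bool" where
  "UGS T \<longleftrightarrow> (\<exists>\<phi>. class_Kinf \<phi> \<and>
     (\<forall>s\<in>linf_plus. \<forall>n. supnorm ((T ^^ n) s) \<le> \<phi> (supnorm s)))"

definition Psi :: "(('i \<Rightarrow> real) \<Rightarrow> ('i \<Rightarrow> real)) \<Rightarrow> ('i \<Rightarrow> real) set" where
  "Psi T = {s\<in>linf_plus. vle (T s) s}"

definition unif_cofinal :: "('i \<Rightarrow> real) set \<Rightarrow> bool" where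
  "unif_cofinal A \<longleftrightarrow> (\<exists>\<phi>. class_Kinf \<phi> \<and>
     (\<forall>s\<in>linf_plus. \<exists>sh\<in>A. vle s sh \<and> supnorm sh \<le> \<phi> (supnorm s)))"

definition increasing_path :: "(real \<Rightarrow> ('i \<Rightarrow> real)) \<Rightarrow> bool" where
  "increasing_path \<sigma> \<longleftrightarrow> (\<forall>r1 r2. 0 \<le> r1 \<longrightarrow> r1 \<le> r2 \<longrightarrow> vle (\<sigma> r1) (\<sigma> r2))"

definition bounded_Psi_path ::
  "(('i \<Rightarrow> real) \<Rightarrow> ('i \<Rightarrow> real)) \<Rightarrow> (real \<Rightarrow> ('i \<Rightarrow> real)) \<Rightarrow> bool" where
  "bounded_Psi_path T \<sigma> \<longleftrightarrow> (\<forall>r\<ge>0. \<sigma> r \<in> Psi T) \<and>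
     (\<exists>\<phi>min \<phi>max. class_Kinf \<phi>min \<and> class_Kinf \<phi>max \<and>
        (\<forall>r\<ge>0. vle (\<lambda>_. \<phi>min r) (\<sigma> r) \<and> vle (\<sigma> r) (\<lambda>_. \<phi>max r)))"

end

theory Submission
  imports Defs
begin

(* For monotone Gamma, every iterate of s under s |-> s (+) Gamma(s) stays below any
   s-hat in Psi(Gamma) with s <= s-hat, so uniform cofinality of Psi(Gamma) gives UGS.
   Conversely, under UGS the iterates of s increase and stay below phi(|s|); their pointwise
   supremum lies in Psi(Gamma) because each Gamma_i depends continuously on the finitely many
   coordinates in I_i. A K-infinity-bounded path in Psi(Gamma) yields cofinality by inverting
   phi_min, cofinality yields such a path through r * 1 <= sigma(r), and replacing sigma(r) by
   the pointwise infimum of sigma over [r, infinity) makes the path increasing, since Psi(Gamma)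
   is closed under infima. (M4) and the equicontinuity of the gains only serve to show that
   Gamma maps bounded vectors to bounded vectors. *)

lemma linf_plusI: "(\<And>i. 0 \<le> s i) \<Longrightarrow> (\<And>i. s i \<le> c) \<Longrightarrow> s \<in> linf_plus"
  unfolding linf_plus_def bdd_above_def by auto

lemma linf_plus_nonneg: "s \<in> linf_plus \<Longrightarrow> 0 \<le> s i"
  unfolding linf_plus_def by auto

lemma linf_plus_le_supnorm: "s \<in> linf_plus \<Longrightarrow> s i \<le> supnorm s"
proof -
  assume "s \<in> linf_plus"
  then have "bdd_above (range (\<lambda>i. \<bar>s i\<bar>))" unfolding linf_plus_def by auto
  then have "\<bar>s i\<bar> \<le> supnorm s" unfolding supnorm_def by (rule cSUP_upper[OF UNIV_I])
  then show ?thesis by simp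
qed

lemma supnorm_nonneg:
  assumes "s \<in> linf_plus"
  shows "0 \<le> supnorm s"
  using linf_plus_nonneg[OF assms] linf_plus_le_supnorm[OF assms] by (rule order_trans)

lemma supnorm_le: "(\<And>i. \<bar>s i\<bar> \<le> c) \<Longrightarrow> supnorm s \<le> c"
  unfolding supnorm_def by (rule cSUP_least) auto

lemma supnorm_le_nonneg: "(\<And>i. 0 \<le> s i) \<Longrightarrow> (\<And>i. s i \<le> c) \<Longrightarrow> supnorm s \<le> c"
  by (rule supnorm_le) simp

lemma supnorm_mono:
  assumes "s \<in> linf_plus" "t \<in> linf_plus" "vle s t"
  shows "supnorm s \<le> supnorm t"
proof (rule supnorm_le_nonneg)
  show "0 \<le> s i" for i using assms(1) by (rule linf_plus_nonneg)
  show "s i \<le> supnorm t" for i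
    using assms(3) linf_plus_le_supnorm[OF assms(2), of i] unfolding vle_def by (metis order_trans)
qed

lemma supnorm_const: "supnorm (\<lambda>_. c) = \<bar>c\<bar>"
  unfolding supnorm_def by simp

lemma const_in_linf_plus: "0 \<le> r \<Longrightarrow> (\<lambda>_. r) \<in> linf_plus"
  by (rule linf_plusI) auto

lemma restr_in_linf_plus:
  assumes "finite J" "\<And>j. j \<in> J \<Longrightarrow> 0 \<le> s j"
  shows "restr s J \<in> linf_plus"
proof (rule linf_plusI)
  show "0 \<le> restr s J i" for i using assms(2) by (simp add: restr_def)
  show "restr s J i \<le> Max (insert 0 (s ` J))" for i
    using assms(1) by (simp add: restr_def)
qed

lemma vmax_in_linf_plus:
  assumes "s \<in> linf_plus" "t \<in> linf_plus"
  shows "vmax s t \<in> linf_plus"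
proof (rule linf_plusI)
  show "0 \<le> vmax s t i" for i
    using linf_plus_nonneg[OF assms(1)] by (simp add: vmax_def le_max_iff_disj)
  show "vmax s t i \<le> max (supnorm s) (supnorm t)" for i
    unfolding vmax_def using assms by (intro max.mono linf_plus_le_supnorm)
qed

lemma vle_trans:
  assumes "vle a b" "vle b c"
  shows "vle a c"
  unfolding vle_def
  using order_trans[OF assms(1)[unfolded vle_def, rule_format] assms(2)[unfolded vle_def, rule_format]]
  by blast

lemma vle_const_supnorm: "s \<in> linf_plus \<Longrightarrow> vle s (\<lambda>_. supnorm s)"
  unfolding vle_def by (simp add: linf_plus_le_supnorm)

lemma supnorm_le_iff_vle_const:
  assumes "s \<in> linf_plus"
  shows "supnorm s \<le> c \<longleftrightarrow> vle s (\<lambda>_. c)"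
proof
  assume "supnorm s \<le> c"
  then show "vle s (\<lambda>_. c)"
    using linf_plus_le_supnorm[OF assms] unfolding vle_def by (blast intro: order_trans)
next
  assume "vle s (\<lambda>_. c)"
  then show "supnorm s \<le> c"
    using linf_plus_nonneg[OF assms] unfolding vle_def by (blast intro: supnorm_le_nonneg)
qed

lemma vmax_le: "vle a c \<Longrightarrow> vle b c \<Longrightarrow> vle (vmax a b) c"
  unfolding vle_def vmax_def by simp

lemma Psi_in_linf_plus: "s \<in> Psi T \<Longrightarrow> s \<in> linf_plus"
  and Psi_le: "s \<in> Psi T \<Longrightarrow> vle (T s) s"
  unfolding Psi_def by auto

lemma class_Kinf_0: "class_Kinf g \<Longrightarrow> g 0 = 0"
  and class_Kinf_nonneg: "class_Kinf g \<Longrightarrow> 0 \<le> x \<Longrightarrow> 0 \<le> g x"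
  and class_Kinf_continuous_on: "class_Kinf g \<Longrightarrow> continuous_on {0..} g"
  and class_Kinf_strict_mono_on: "class_Kinf g \<Longrightarrow> strict_mono_on {0..} g"
  and class_Kinf_unbounded: "class_Kinf g \<Longrightarrow> \<exists>r\<ge>0. M < g r"
  unfolding class_Kinf_def class_K_def by auto

lemma class_Kinf_less: "class_Kinf g \<Longrightarrow> 0 \<le> x \<Longrightarrow> x < y \<Longrightarrow> g x < g y"
  by (auto dest: class_Kinf_strict_mono_on simp: strict_mono_on_def)

lemma class_Kinf_mono: "class_Kinf g \<Longrightarrow> 0 \<le> x \<Longrightarrow> x \<le> y \<Longrightarrow> g x \<le> g y"
  using class_Kinf_less by (metis order_le_less)

lemma class_KinfI:
  assumes "g 0 = 0" "continuous_on {0..} g" "\<And>x y. 0 \<le> x \<Longrightarrow> x < y \<Longrightarrow> g x < g y"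
    and "\<And>M. \<exists>r\<ge>0. M < g r"
  shows "class_Kinf g"
proof -
  have "0 \<le> g r" if "0 \<le> r" for r
    using assms(1) assms(3)[of 0 r] that by (cases "r = 0") auto
  with assms show ?thesis
    unfolding class_Kinf_def class_K_def by (auto intro: strict_mono_onI)
qed

lemma class_Kinf_id: "class_Kinf (\<lambda>x. x)"
proof (rule class_KinfI)
  show "\<exists>r\<ge>0. M < r" for M :: real by (intro exI[of _ "\<bar>M\<bar> + 1"]) auto
qed (auto intro: continuous_intros)

lemma class_Kinf_comp:
  assumes f: "class_Kinf f" and g: "class_Kinf g"
  shows "class_Kinf (\<lambda>x. f (g x))"
proof (rule class_KinfI)
  show "continuous_on {0..} (\<lambda>x. f (g x))"
    using class_Kinf_continuous_on[OF f] class_Kinf_continuous_on[OF g] class_Kinf_nonneg[OF g]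
    by (auto intro: continuous_on_compose2)
  show "\<exists>r\<ge>0. M < f (g r)" for M
  proof -
    obtain r where r: "r \<ge> 0" "M < f r" using class_Kinf_unbounded[OF f] by blast
    obtain r' where r': "r' \<ge> 0" "r < g r'" using class_Kinf_unbounded[OF g] by blast
    show ?thesis using r r' class_Kinf_mono[OF f, of r "g r'"] by (intro exI[of _ r']) auto
  qed
qed (use f g in \<open>auto simp: class_Kinf_0 class_Kinf_nonneg class_Kinf_less\<close>)

lemma class_Kinf_image: "class_Kinf g \<Longrightarrow> g ` {0..} = {0..}"
proof (intro equalityI subsetI)
  fix y :: real assume g: "class_Kinf g" and "y \<in> {0..}"
  obtain r where "r \<ge> 0" "y < g r" using class_Kinf_unbounded[OF g] by blast
  then obtain x where "0 \<le> x" "g x = y"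
    using IVT'[of g 0 y r] \<open>y \<in> {0..}\<close> class_Kinf_0[OF g]
      continuous_on_subset[OF class_Kinf_continuous_on[OF g]] by fastforce
  then show "y \<in> g ` {0..}" by auto
qed (auto simp: class_Kinf_nonneg)

lemma class_Kinf_inverse:
  assumes g: "class_Kinf g"
  obtains h where "class_Kinf h" "\<And>y. 0 \<le> y \<Longrightarrow> g (h y) = y"
proof -
  obtain h where h: "homeomorphism {0..} {0..} g h"
    using homeomorphism_into_1d[OF path_connected_Ici class_Kinf_continuous_on[OF g]
        class_Kinf_image[OF g] strict_mono_on_imp_inj_on[OF class_Kinf_strict_mono_on[OF g]]]
    by blast
  have hg: "\<And>x. 0 \<le> x \<Longrightarrow> h (g x) = x" and gh: "\<And>y. 0 \<le> y \<Longrightarrow> g (h y) = y"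
    using homeomorphism_apply1[OF h] homeomorphism_apply2[OF h] by simp_all
  have h_nonneg: "\<And>y. 0 \<le> y \<Longrightarrow> 0 \<le> h y"
    using homeomorphism_image2[OF h] by (metis atLeast_iff image_eqI)
  have "class_Kinf h"
  proof (rule class_KinfI)
    show "h 0 = 0" using hg[of 0] class_Kinf_0[OF g] by simp
    show "h y1 < h y2" if "0 \<le> y1" "y1 < y2" for y1 y2
    proof (rule ccontr)
      assume "\<not> h y1 < h y2"
      then have "g (h y2) \<le> g (h y1)" using class_Kinf_mono[OF g] h_nonneg that by simp
      then show False using gh that by simp
    qed
    show "\<exists>r\<ge>0. M < h r" for M
      using hg[of "\<bar>M\<bar> + 1"] class_Kinf_nonneg[OF g, of "\<bar>M\<bar> + 1"]
      by (intro exI[of _ "g (\<bar>M\<bar> + 1)"]) auto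
  qed (rule homeomorphism_cont2[OF h])
  then show ?thesis using gh by (rule that)
qed

lemma pointwise_equicontinuous_imp_bounded:
  fixes f :: "'k \<Rightarrow> real \<Rightarrow> real"
  assumes equicont: "\<And>a \<epsilon>. 0 \<le> a \<Longrightarrow> 0 < \<epsilon> \<Longrightarrow>
      \<exists>\<delta>>0. \<forall>k\<in>K. \<forall>r\<ge>0. \<bar>r - a\<bar> \<le> \<delta> \<longrightarrow> \<bar>f k r - f k a\<bar> \<le> \<epsilon>"
    and at_0: "\<forall>k\<in>K. f k 0 = 0"
    and "0 \<le> R"
  shows "\<exists>B. \<forall>k\<in>K. \<bar>f k R\<bar> \<le> B"
proof -
  have bounded_at_0: "\<exists>B. \<forall>k\<in>K. \<bar>f k 0\<bar> \<le> B"
    using at_0 by (intro exI[of _ 0]) simp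
  show ?thesis
  proof (rule connected_induction_simple[where S = "{0..}" and a = 0 and b = R
        and P = "\<lambda>r. \<exists>B. \<forall>k\<in>K. \<bar>f k r\<bar> \<le> B"])
    fix a :: real assume "a \<in> {0..}"
    then obtain \<delta> where "\<delta> > 0" and \<delta>: "\<forall>k\<in>K. \<forall>r\<ge>0. \<bar>r - a\<bar> \<le> \<delta> \<longrightarrow> \<bar>f k r - f k a\<bar> \<le> 1"
      using equicont[of a 1] by auto
    have "\<exists>B. \<forall>k\<in>K. \<bar>f k y\<bar> \<le> B"
      if "x \<in> {0..} \<inter> ball a \<delta>" "y \<in> {0..} \<inter> ball a \<delta>" "\<forall>k\<in>K. \<bar>f k x\<bar> \<le> B" for x y B
    proof (intro exI ballI)
      fix k assume "k \<in> K"
      from that have "0 \<le> x" "0 \<le> y" "dist x a < \<delta>" "dist y a < \<delta>"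
        by (auto simp: dist_commute)
      then have "\<bar>f k x - f k a\<bar> \<le> 1" "\<bar>f k y - f k a\<bar> \<le> 1"
        using \<delta> \<open>k \<in> K\<close> by (auto simp: dist_real_def)
      moreover have "\<bar>f k x\<bar> \<le> B" using that(3) \<open>k \<in> K\<close> by blast
      ultimately show "\<bar>f k y\<bar> \<le> B + 2" by linarith
    qed
    then show "\<exists>T. openin (top_of_set {0..}) T \<and> a \<in> T \<and>
        (\<forall>x\<in>T. \<forall>y\<in>T. (\<exists>B. \<forall>k\<in>K. \<bar>f k x\<bar> \<le> B) \<longrightarrow> (\<exists>B. \<forall>k\<in>K. \<bar>f k y\<bar> \<le> B))"
    proof (intro exI[of _ "{0..} \<inter> ball a \<delta>"] conjI)
      show "openin (top_of_set {0..}) ({0..} \<inter> ball a \<delta>)" by (rule openin_open_Int) simp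
      show "a \<in> {0..} \<inter> ball a \<delta>" using \<open>a \<in> {0..}\<close> \<open>\<delta> > 0\<close> by simp
    qed blast
  qed (use bounded_at_0 \<open>0 \<le> R\<close> in simp_all)
qed

lemma unif_cofinal_imp_Psi_path:
  fixes T :: "('i \<Rightarrow> real) \<Rightarrow> 'i \<Rightarrow> real"
  assumes "unif_cofinal (Psi T)"
  shows "\<exists>\<sigma>. bounded_Psi_path T \<sigma>"
proof -
  obtain \<phi> where \<phi>: "class_Kinf \<phi>"
    and cofinal: "\<forall>s\<in>linf_plus. \<exists>sh\<in>Psi T. vle s sh \<and> supnorm sh \<le> \<phi> (supnorm s)"
    using assms unfolding unif_cofinal_def by blast
  define \<sigma> where "\<sigma> r = (SOME sh. sh \<in> Psi T \<and> vle (\<lambda>_. r) sh \<and> supnorm sh \<le> \<phi> r)" for r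
  have \<sigma>: "\<sigma> r \<in> Psi T \<and> vle (\<lambda>_. r) (\<sigma> r) \<and> supnorm (\<sigma> r) \<le> \<phi> r" if r: "0 \<le> r" for r
  proof -
    obtain sh where "sh \<in> Psi T" "vle (\<lambda>_. r) sh" "supnorm sh \<le> \<phi> (supnorm (\<lambda>_::'i. r))"
      using cofinal const_in_linf_plus[OF r] by blast
    then have "sh \<in> Psi T \<and> vle (\<lambda>_. r) sh \<and> supnorm sh \<le> \<phi> r"
      by (simp add: supnorm_const abs_of_nonneg[OF r])
    then show ?thesis
      unfolding \<sigma>_def by (rule someI[where P = "\<lambda>sh. sh \<in> Psi T \<and> vle (\<lambda>_. r) sh \<and> supnorm sh \<le> \<phi> r"])
  qed
  then have "vle (\<sigma> r) (\<lambda>_. \<phi> r)" if "0 \<le> r" for r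
    using supnorm_le_iff_vle_const[OF Psi_in_linf_plus] that by blast
  with \<sigma> have "bounded_Psi_path T \<sigma>"
    unfolding bounded_Psi_path_def using class_Kinf_id \<phi> by blast
  then show ?thesis by blast
qed

lemma Psi_path_imp_unif_cofinal:
  assumes "bounded_Psi_path T \<sigma>"
  shows "unif_cofinal (Psi T)"
proof -
  obtain \<phi>min \<phi>max where "class_Kinf \<phi>min" and \<phi>max: "class_Kinf \<phi>max"
    and bounds: "\<forall>r\<ge>0. vle (\<lambda>_. \<phi>min r) (\<sigma> r) \<and> vle (\<sigma> r) (\<lambda>_. \<phi>max r)"
    and in_Psi: "\<forall>r\<ge>0. \<sigma> r \<in> Psi T"
    using assms unfolding bounded_Psi_path_def by blast
  obtain h where h: "class_Kinf h" and inverse: "\<And>y. 0 \<le> y \<Longrightarrow> \<phi>min (h y) = y"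
    using class_Kinf_inverse[OF \<open>class_Kinf \<phi>min\<close>] by blast
  have "\<exists>sh\<in>Psi T. vle s sh \<and> supnorm sh \<le> \<phi>max (h (supnorm s))" if s: "s \<in> linf_plus" for s
  proof (intro bexI conjI)
    define r where "r = h (supnorm s)"
    have r: "0 \<le> r" "\<phi>min r = supnorm s"
      unfolding r_def using class_Kinf_nonneg[OF h] inverse supnorm_nonneg[OF s] by auto
    show "\<sigma> r \<in> Psi T" using in_Psi r(1) by blast
    have "vle (\<lambda>_. supnorm s) (\<sigma> r)" using bounds r(1) unfolding r(2)[symmetric] by simp
    then show "vle s (\<sigma> r)" by (rule vle_trans[OF vle_const_supnorm[OF s]])
    show "supnorm (\<sigma> r) \<le> \<phi>max (h (supnorm s))"
      using supnorm_le_iff_vle_const[OF Psi_in_linf_plus[OF \<open>\<sigma> r \<in> Psi T\<close>]] bounds r(1)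
      unfolding r_def by blast
  qed
  then show ?thesis
    unfolding unif_cofinal_def using class_Kinf_comp[OF \<phi>max h] by blast
qed

lemma INF_in_Psi:
  assumes mono: "\<And>s t. s \<in> linf_plus \<Longrightarrow> t \<in> linf_plus \<Longrightarrow> vle s t \<Longrightarrow> vle (T s) (T t)"
    and "S \<noteq> {}" and in_Psi: "\<And>t. t \<in> S \<Longrightarrow> \<sigma> t \<in> Psi T"
  shows "(\<lambda>i. INF t\<in>S. \<sigma> t i) \<in> Psi T"
proof -
  let ?\<tau> = "\<lambda>i. INF t\<in>S. \<sigma> t i"
  have nonneg: "0 \<le> \<sigma> t i" if "t \<in> S" for t i
    using linf_plus_nonneg[OF Psi_in_linf_plus[OF in_Psi[OF that]]] .
  have le: "?\<tau> i \<le> \<sigma> t i" if "t \<in> S" for t i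
    by (rule cINF_lower[OF bdd_belowI2[OF nonneg] that])
  obtain t0 where "t0 \<in> S" using \<open>S \<noteq> {}\<close> by blast
  have \<tau>_linf: "?\<tau> \<in> linf_plus"
  proof (rule linf_plusI)
    show "0 \<le> ?\<tau> i" for i using \<open>S \<noteq> {}\<close> nonneg by (intro cINF_greatest) auto
    show "?\<tau> i \<le> supnorm (\<sigma> t0)" for i
      using le[OF \<open>t0 \<in> S\<close>] linf_plus_le_supnorm[OF Psi_in_linf_plus[OF in_Psi[OF \<open>t0 \<in> S\<close>]]]
      by (rule order_trans)
  qed
  have "T ?\<tau> i \<le> \<sigma> t i" if "t \<in> S" for t i
  proof -
    have "vle (T ?\<tau>) (T (\<sigma> t))"
      using le that by (intro mono \<tau>_linf Psi_in_linf_plus[OF in_Psi[OF that]]) (simp add: vle_def)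
    with Psi_le[OF in_Psi[OF that]] have "vle (T ?\<tau>) (\<sigma> t)" by (rule vle_trans[rotated])
    then show ?thesis unfolding vle_def ..
  qed
  then have "vle (T ?\<tau>) ?\<tau>"
    unfolding vle_def using \<open>S \<noteq> {}\<close> by (intro allI cINF_greatest) auto
  with \<tau>_linf show ?thesis unfolding Psi_def by blast
qed

lemma Psi_path_imp_increasing_Psi_path:
  assumes mono: "\<And>s t. s \<in> linf_plus \<Longrightarrow> t \<in> linf_plus \<Longrightarrow> vle s t \<Longrightarrow> vle (T s) (T t)"
    and "bounded_Psi_path T \<sigma>"
  shows "\<exists>\<tau>. bounded_Psi_path T \<tau> \<and> increasing_path \<tau>"
proof -
  obtain \<phi>min \<phi>max where \<phi>: "class_Kinf \<phi>min" "class_Kinf \<phi>max"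
    and bounds: "\<forall>r\<ge>0. vle (\<lambda>_. \<phi>min r) (\<sigma> r) \<and> vle (\<sigma> r) (\<lambda>_. \<phi>max r)"
    and in_Psi: "\<forall>r\<ge>0. \<sigma> r \<in> Psi T"
    using assms(2) unfolding bounded_Psi_path_def by blast
  define \<tau> where "\<tau> r = (\<lambda>i. INF t\<in>{r..}. \<sigma> t i)" for r
  have nonneg: "0 \<le> \<sigma> t i" if "0 \<le> t" for t i
    using in_Psi that Psi_in_linf_plus linf_plus_nonneg[of "\<sigma> t" i] by blast
  have bdd: "bdd_below ((\<lambda>t. \<sigma> t i) ` {r..})" if "0 \<le> r" for r i
    using nonneg that by (intro bdd_belowI2[where m = 0]) simp
  have \<tau>_Psi: "\<tau> r \<in> Psi T" if "0 \<le> r" for r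
    unfolding \<tau>_def by (rule INF_in_Psi[OF mono]) (use in_Psi that in auto)
  have lower: "\<phi>min r \<le> \<tau> r i" if "0 \<le> r" for r i
    unfolding \<tau>_def
  proof (rule cINF_greatest)
    fix t assume "t \<in> {r..}"
    then have "\<phi>min r \<le> \<phi>min t" "\<phi>min t \<le> \<sigma> t i"
      using class_Kinf_mono[OF \<phi>(1) that] bounds that unfolding vle_def by auto
    then show "\<phi>min r \<le> \<sigma> t i" by (rule order_trans)
  qed simp
  have upper: "\<tau> r i \<le> \<phi>max r" if "0 \<le> r" for r i
  proof -
    have "\<tau> r i \<le> \<sigma> r i" unfolding \<tau>_def by (rule cINF_lower[OF bdd[OF that]]) simp
    also have "\<dots> \<le> \<phi>max r" using bounds that unfolding vle_def by blast
    finally show ?thesis .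
  qed
  have "bounded_Psi_path T \<tau>"
    unfolding bounded_Psi_path_def vle_def using \<tau>_Psi \<phi> lower upper by blast
  moreover have "increasing_path \<tau>"
    unfolding increasing_path_def vle_def \<tau>_def
  proof (intro allI impI)
    fix r1 r2 :: real and i assume r: "0 \<le> r1" "r1 \<le> r2"
    show "(INF t\<in>{r1..}. \<sigma> t i) \<le> (INF t\<in>{r2..}. \<sigma> t i)"
      by (rule cINF_superset_mono) (use bdd r in auto)
  qed
  ultimately show ?thesis by blast
qed

lemma iterates_below_Psi:
  assumes mono: "\<And>s t. s \<in> linf_plus \<Longrightarrow> t \<in> linf_plus \<Longrightarrow> vle s t \<Longrightarrow> vle (T s) (T t)"
    and sh: "sh \<in> Psi T" and s: "s \<in> linf_plus" "vle s sh"
  shows "((\<lambda>s. vmax s (T s)) ^^ n) s \<in> linf_plus \<and> vle (((\<lambda>s. vmax s (T s)) ^^ n) s) sh"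
proof (induction n)
  case (Suc n)
  let ?x = "((\<lambda>s. vmax s (T s)) ^^ n) s"
  have "vle (T ?x) (T sh)" using mono Suc.IH Psi_in_linf_plus[OF sh] by blast
  then have "vle (T ?x) sh" using Psi_le[OF sh] by (rule vle_trans)
  then have le: "vle (vmax ?x (T ?x)) sh" using Suc.IH vmax_le by blast
  have "vmax ?x (T ?x) \<in> linf_plus"
  proof (rule linf_plusI)
    show "0 \<le> vmax ?x (T ?x) i" for i
      using linf_plus_nonneg[of ?x i] Suc.IH by (simp add: vmax_def le_max_iff_disj)
    show "vmax ?x (T ?x) i \<le> supnorm sh" for i
      using le linf_plus_le_supnorm[OF Psi_in_linf_plus[OF sh], of i] unfolding vle_def
      by (metis order_trans)
  qed
  with le show ?case by simp
qed (use s in simp)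

lemma unif_cofinal_Psi_imp_UGS:
  assumes mono: "\<And>s t. s \<in> linf_plus \<Longrightarrow> t \<in> linf_plus \<Longrightarrow> vle s t \<Longrightarrow> vle (T s) (T t)"
    and "unif_cofinal (Psi T)"
  shows "UGS (\<lambda>s. vmax s (T s))"
proof -
  obtain \<phi> where \<phi>: "class_Kinf \<phi>"
    and cofinal: "\<forall>s\<in>linf_plus. \<exists>sh\<in>Psi T. vle s sh \<and> supnorm sh \<le> \<phi> (supnorm s)"
    using assms(2) unfolding unif_cofinal_def by blast
  have "supnorm (((\<lambda>s. vmax s (T s)) ^^ n) s) \<le> \<phi> (supnorm s)" if s: "s \<in> linf_plus" for s n
  proof -
    obtain sh where sh: "sh \<in> Psi T" "vle s sh" "supnorm sh \<le> \<phi> (supnorm s)"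
      using cofinal s by blast
    have "supnorm (((\<lambda>s. vmax s (T s)) ^^ n) s) \<le> supnorm sh"
      using iterates_below_Psi[OF mono sh(1) s sh(2)] Psi_in_linf_plus[OF sh(1)] supnorm_mono
      by blast
    with sh(3) show ?thesis by linarith
  qed
  with \<phi> show ?thesis unfolding UGS_def by blast
qed

lemma SUP_iterates_in_Psi:
  fixes T :: "('i \<Rightarrow> real) \<Rightarrow> 'i \<Rightarrow> real" and s :: "'i \<Rightarrow> real" and c :: real
  defines "x \<equiv> \<lambda>n. ((\<lambda>s. vmax s (T s)) ^^ n) s"
  assumes T_linf: "\<And>s. s \<in> linf_plus \<Longrightarrow> T s \<in> linf_plus"
    and T_tendsto: "\<And>x s i. (\<And>n. x n \<in> linf_plus) \<Longrightarrow> s \<in> linf_plus \<Longrightarrow>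
      (\<And>j. (\<lambda>n. x n j) \<longlonglongrightarrow> s j) \<Longrightarrow> (\<lambda>n. T (x n) i) \<longlonglongrightarrow> T s i"
    and s: "s \<in> linf_plus" and bound: "\<And>n i. x n i \<le> c"
  shows "(\<lambda>i. SUP n. x n i) \<in> Psi T" "vle s (\<lambda>i. SUP n. x n i)" "supnorm (\<lambda>i. SUP n. x n i) \<le> c"
proof -
  define sh where "sh i = (SUP n. x n i)" for i
  have x_Suc: "x (Suc n) = vmax (x n) (T (x n))" for n
    unfolding x_def by simp
  have x_linf: "x n \<in> linf_plus" for n
    by (induction n) (simp_all add: x_def s vmax_in_linf_plus T_linf)
  have bdd: "bdd_above (range (\<lambda>n. x n i))" for i
    using bound by (intro bdd_aboveI2)
  have x_le_sh: "x n i \<le> sh i" for n i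
    unfolding sh_def by (rule cSUP_upper[OF UNIV_I bdd])
  have sh_lim: "(\<lambda>n. x n i) \<longlonglongrightarrow> sh i" for i
    unfolding sh_def by (rule LIMSEQ_incseq_SUP[OF bdd]) (simp add: incseq_SucI x_Suc vmax_def)
  have sh_bound: "sh i \<le> c" for i
    unfolding sh_def by (rule cSUP_least) (simp_all add: bound)
  have s_le_sh: "vle s sh"
    using x_le_sh[of 0] unfolding vle_def x_def by simp
  have sh_nonneg: "0 \<le> sh i" for i
    using linf_plus_nonneg[OF s, of i] s_le_sh unfolding vle_def by (metis order_trans)
  have sh_linf: "sh \<in> linf_plus"
    by (rule linf_plusI[OF sh_nonneg sh_bound])
  have "T sh i \<le> sh i" for i
  proof (rule LIMSEQ_le_const2[OF T_tendsto[OF x_linf sh_linf sh_lim]])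
    have "T (x n) i \<le> sh i" for n
      using x_le_sh[of "Suc n" i] by (simp add: x_Suc vmax_def)
    then show "\<exists>N. \<forall>n\<ge>N. T (x n) i \<le> sh i" by blast
  qed
  with sh_linf have "sh \<in> Psi T"
    unfolding Psi_def vle_def by blast
  moreover have "supnorm sh \<le> c"
    by (rule supnorm_le_nonneg[OF sh_nonneg sh_bound])
  ultimately show "(\<lambda>i. SUP n. x n i) \<in> Psi T" "vle s (\<lambda>i. SUP n. x n i)"
    "supnorm (\<lambda>i. SUP n. x n i) \<le> c"
    using s_le_sh unfolding sh_def by simp_all
qed

lemma UGS_imp_unif_cofinal_Psi:
  assumes T_linf: "\<And>s. s \<in> linf_plus \<Longrightarrow> T s \<in> linf_plus"
    and T_tendsto: "\<And>x s i. (\<And>n. x n \<in> linf_plus) \<Longrightarrow> s \<in> linf_plus \<Longrightarrow>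
      (\<And>j. (\<lambda>n. x n j) \<longlonglongrightarrow> s j) \<Longrightarrow> (\<lambda>n. T (x n) i) \<longlonglongrightarrow> T s i"
    and "UGS (\<lambda>s. vmax s (T s))"
  shows "unif_cofinal (Psi T)"
proof -
  let ?x = "\<lambda>s n. ((\<lambda>s. vmax s (T s)) ^^ n) s"
  obtain \<phi> where \<phi>: "class_Kinf \<phi>"
    and bound: "\<forall>s\<in>linf_plus. \<forall>n. supnorm (?x s n) \<le> \<phi> (supnorm s)"
    using assms(3) unfolding UGS_def by blast
  have "\<exists>sh\<in>Psi T. vle s sh \<and> supnorm sh \<le> \<phi> (supnorm s)" if s: "s \<in> linf_plus" for s
  proof -
    have x_linf: "?x s n \<in> linf_plus" for n
      by (induction n) (simp_all add: s vmax_in_linf_plus T_linf)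
    have "?x s n i \<le> \<phi> (supnorm s)" for n i
    proof -
      have "?x s n i \<le> supnorm (?x s n)" by (rule linf_plus_le_supnorm[OF x_linf])
      also have "\<dots> \<le> \<phi> (supnorm s)" using bound s by blast
      finally show ?thesis .
    qed
    from SUP_iterates_in_Psi[OF T_linf T_tendsto s this] show ?thesis by blast
  qed
  with \<phi> show ?thesis unfolding unif_cofinal_def by blast
qed

locale gain_operator =
  fixes Ii :: "'i \<Rightarrow> 'i set"
    and gam :: "'i \<Rightarrow> 'i \<Rightarrow> real \<Rightarrow> real"
    and mu :: "'i \<Rightarrow> ('i \<Rightarrow> real) \<Rightarrow> ereal"
  assumes gain_data: "gain_data Ii gam mu"
begin

lemmas gain_data_unfolded = gain_data[unfolded gain_data_def]

lemma finite_Ii: "finite (Ii i)"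
  using gain_data_unfolded[THEN conjunct1] by blast

lemma gam_class_Kinf: "j \<in> Ii i \<Longrightarrow> class_Kinf (gam i j)"
  using gain_data_unfolded[THEN conjunct2, THEN conjunct1] by blast

lemma gam_equicontinuous:
  "0 \<le> r \<Longrightarrow> 0 < \<epsilon> \<Longrightarrow> \<exists>\<delta>>0. \<forall>i. \<forall>j\<in>Ii i. \<forall>r'\<ge>0.
     \<bar>r' - r\<bar> \<le> \<delta> \<longrightarrow> \<bar>gam i j r' - gam i j r\<bar> \<le> \<epsilon>"
  using gain_data_unfolded[THEN conjunct2, THEN conjunct2, THEN conjunct1] by blast

lemma mu_nonneg: "s \<in> linf_plus \<Longrightarrow> 0 \<le> mu i s"
  using gain_data_unfolded[THEN conjunct2, THEN conjunct2, THEN conjunct2, THEN conjunct1] by blast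

lemma mu_zero: "mu i (\<lambda>_. 0) = 0"
  using gain_data_unfolded[THEN conjunct2, THEN conjunct2, THEN conjunct2, THEN conjunct2,
      THEN conjunct1] by blast

lemma mu_mono: "s \<in> linf_plus \<Longrightarrow> t \<in> linf_plus \<Longrightarrow> vle s t \<Longrightarrow> mu i s \<le> mu i t"
  using gain_data_unfolded[THEN conjunct2, THEN conjunct2, THEN conjunct2, THEN conjunct2,
      THEN conjunct2, THEN conjunct1] by blast

lemma mu_finite:
  "finite J \<Longrightarrow> s \<in> linf_plus \<Longrightarrow> \<forall>j. j \<notin> J \<longrightarrow> s j = 0 \<Longrightarrow> mu i s \<noteq> \<infinity>"
  using gain_data_unfolded[THEN conjunct2, THEN conjunct2, THEN conjunct2, THEN conjunct2,
      THEN conjunct2, THEN conjunct2, THEN conjunct1] by blast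

lemma mu_continuous:
  "finite J \<Longrightarrow> s0 \<in> linf_plus \<Longrightarrow> \<forall>j. j \<notin> J \<longrightarrow> s0 j = 0 \<Longrightarrow> 0 < \<epsilon> \<Longrightarrow>
    \<exists>\<delta>>0. \<forall>s\<in>linf_plus. (\<forall>j. j \<notin> J \<longrightarrow> s j = 0) \<longrightarrow> supnorm (\<lambda>k. s k - s0 k) < \<delta> \<longrightarrow>
      \<bar>real_of_ereal (mu i s) - real_of_ereal (mu i s0)\<bar> < \<epsilon>"
  using gain_data_unfolded[THEN conjunct2, THEN conjunct2, THEN conjunct2, THEN conjunct2,
      THEN conjunct2, THEN conjunct2, THEN conjunct1] by blast

lemma mu_restr_uniformly_continuous:
  "A \<subseteq> linf_plus \<Longrightarrow> bdd_above (supnorm ` A) \<Longrightarrow> 0 < \<epsilon> \<Longrightarrow>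
    \<exists>\<delta>>0. \<forall>s0\<in>A. \<forall>s\<in>linf_plus. supnorm (\<lambda>k. s k - s0 k) \<le> \<delta> \<longrightarrow>
      (\<forall>i. \<bar>real_of_ereal (mu i (restr s (Ii i))) - real_of_ereal (mu i (restr s0 (Ii i)))\<bar> \<le> \<epsilon>)"
  using gain_data_unfolded[THEN conjunct2, THEN conjunct2, THEN conjunct2, THEN conjunct2,
      THEN conjunct2, THEN conjunct2, THEN conjunct2] by blast

lemma gam_nonneg: "j \<in> Ii i \<Longrightarrow> 0 \<le> r \<Longrightarrow> 0 \<le> gam i j r"
  by (rule class_Kinf_nonneg[OF gam_class_Kinf])

lemma restr_Ii_in_linf_plus: "(\<And>j. j \<in> Ii i \<Longrightarrow> 0 \<le> x j) \<Longrightarrow> restr x (Ii i) \<in> linf_plus"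
  by (rule restr_in_linf_plus[OF finite_Ii])

lemma mu_restr_real:
  assumes "\<And>j. j \<in> Ii i \<Longrightarrow> 0 \<le> x j"
  shows "mu i (restr x (Ii i)) = ereal (real_of_ereal (mu i (restr x (Ii i))))"
    and "0 \<le> real_of_ereal (mu i (restr x (Ii i)))"
proof -
  have x: "restr x (Ii i) \<in> linf_plus" by (rule restr_Ii_in_linf_plus[OF assms])
  have "mu i (restr x (Ii i)) \<noteq> \<infinity>"
    by (rule mu_finite[OF finite_Ii[of i] x]) (simp add: restr_def)
  moreover have "0 \<le> mu i (restr x (Ii i))" by (rule mu_nonneg[OF x])
  ultimately show "mu i (restr x (Ii i)) = ereal (real_of_ereal (mu i (restr x (Ii i))))"
    and "0 \<le> real_of_ereal (mu i (restr x (Ii i)))"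
    by (cases "mu i (restr x (Ii i))"; simp)+
qed

lemma mu_restr_mono:
  assumes "\<And>j. j \<in> Ii i \<Longrightarrow> 0 \<le> x j" and "\<And>j. j \<in> Ii i \<Longrightarrow> x j \<le> y j"
  shows "real_of_ereal (mu i (restr x (Ii i))) \<le> real_of_ereal (mu i (restr y (Ii i)))"
proof -
  have y_nonneg: "0 \<le> y j" if "j \<in> Ii i" for j
    using assms that by (meson order_trans)
  have "mu i (restr x (Ii i)) \<le> mu i (restr y (Ii i))"
    by (rule mu_mono[OF restr_Ii_in_linf_plus restr_Ii_in_linf_plus])
      (use assms y_nonneg in \<open>auto simp: vle_def restr_def\<close>)
  then show ?thesis
    by (subst (asm) (1 2) mu_restr_real(1)) (use assms(1) y_nonneg in simp_all)
qed

lemma gain_op_eq: "gain_op Ii gam mu s i = real_of_ereal (mu i (restr (\<lambda>j. gam i j (s j)) (Ii i)))"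
  unfolding gain_op_def restr_def by simp

lemma gain_op_nonneg: "s \<in> linf_plus \<Longrightarrow> 0 \<le> gain_op Ii gam mu s i"
  unfolding gain_op_eq by (rule mu_restr_real(2)) (simp add: gam_nonneg linf_plus_nonneg)

lemma gain_op_mono:
  assumes "s \<in> linf_plus" "t \<in> linf_plus" "vle s t"
  shows "vle (gain_op Ii gam mu s) (gain_op Ii gam mu t)"
  unfolding vle_def gain_op_eq
proof
  fix i
  show "real_of_ereal (mu i (restr (\<lambda>j. gam i j (s j)) (Ii i)))
      \<le> real_of_ereal (mu i (restr (\<lambda>j. gam i j (t j)) (Ii i)))"
    using assms linf_plus_nonneg[OF assms(1)]
    by (intro mu_restr_mono) (auto simp: gam_nonneg vle_def intro: class_Kinf_mono[OF gam_class_Kinf])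
qed

lemma gam_bounded:
  assumes "0 \<le> R"
  obtains B where "0 \<le> B" "\<And>i j r. j \<in> Ii i \<Longrightarrow> 0 \<le> r \<Longrightarrow> r \<le> R \<Longrightarrow> gam i j r \<le> B"
proof -
  have "\<exists>\<delta>>0. \<forall>k\<in>Sigma UNIV Ii. \<forall>r\<ge>0. \<bar>r - a\<bar> \<le> \<delta> \<longrightarrow> \<bar>case_prod gam k r - case_prod gam k a\<bar> \<le> \<epsilon>"
    if a: "0 \<le> a" "0 < \<epsilon>" for a \<epsilon>
  proof -
    obtain \<delta> where "\<delta> > 0"
      and \<delta>: "\<forall>i. \<forall>j\<in>Ii i. \<forall>r\<ge>0. \<bar>r - a\<bar> \<le> \<delta> \<longrightarrow> \<bar>gam i j r - gam i j a\<bar> \<le> \<epsilon>"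
      using gam_equicontinuous[OF a] by blast
    then show ?thesis by (intro exI[of _ \<delta>]) auto
  qed
  moreover have "\<forall>k\<in>Sigma UNIV Ii. case_prod gam k 0 = 0"
    using class_Kinf_0[OF gam_class_Kinf] by auto
  ultimately obtain B where B: "\<forall>k\<in>Sigma UNIV Ii. \<bar>case_prod gam k R\<bar> \<le> B"
    using pointwise_equicontinuous_imp_bounded[where f = "case_prod gam" and K = "Sigma UNIV Ii",
        OF _ _ assms]
    by blast
  show ?thesis
  proof (rule that[of "max B 0"])
    fix i j r assume "j \<in> Ii i" "0 \<le> r" "r \<le> R"
    then have "gam i j r \<le> gam i j R" by (intro class_Kinf_mono[OF gam_class_Kinf])
    also have "\<dots> \<le> B" using B[rule_format, of "(i, j)"] \<open>j \<in> Ii i\<close> by simp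
    finally show "gam i j r \<le> max B 0" by simp
  qed simp
qed

lemma mu_restr_const_bounded:
  assumes "0 \<le> B"
  obtains N where "\<And>i. real_of_ereal (mu i (restr (\<lambda>_. B) (Ii i))) \<le> N"
proof -
  let ?f = "\<lambda>i x. real_of_ereal (mu i (restr (\<lambda>_. x) (Ii i)))"
  have "\<exists>\<delta>>0. \<forall>i\<in>UNIV. \<forall>r\<ge>0. \<bar>r - a\<bar> \<le> \<delta> \<longrightarrow> \<bar>?f i r - ?f i a\<bar> \<le> \<epsilon>"
    if "0 \<le> a" "0 < \<epsilon>" for a \<epsilon>
  proof -
    have "{\<lambda>_::'i. a} \<subseteq> linf_plus" "bdd_above (supnorm ` {\<lambda>_::'i. a})"
      using const_in_linf_plus[OF \<open>0 \<le> a\<close>] by simp_all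
    then obtain \<delta> where "\<delta> > 0" and \<delta>: "\<forall>s0\<in>{\<lambda>_. a}. \<forall>s\<in>linf_plus. supnorm (\<lambda>k. s k - s0 k) \<le> \<delta> \<longrightarrow>
        (\<forall>i. \<bar>real_of_ereal (mu i (restr s (Ii i))) - real_of_ereal (mu i (restr s0 (Ii i)))\<bar> \<le> \<epsilon>)"
      using mu_restr_uniformly_continuous[OF _ _ \<open>0 < \<epsilon>\<close>] by blast
    have "\<bar>?f i r - ?f i a\<bar> \<le> \<epsilon>" if "0 \<le> r" "\<bar>r - a\<bar> \<le> \<delta>" for i r
    proof -
      have "supnorm (\<lambda>k::'i. r - a) \<le> \<delta>" using that(2) by (simp add: supnorm_const)
      then show ?thesis by (rule \<delta>[rule_format, OF singletonI const_in_linf_plus[OF \<open>0 \<le> r\<close>]])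
    qed
    with \<open>\<delta> > 0\<close> show ?thesis by blast
  qed
  moreover have "\<forall>i\<in>UNIV. ?f i 0 = 0"
    by (simp add: restr_def mu_zero)
  ultimately obtain N where "\<forall>i\<in>UNIV. \<bar>?f i B\<bar> \<le> N"
    using pointwise_equicontinuous_imp_bounded[where f = ?f and K = UNIV, OF _ _ assms] by blast
  then have "?f i B \<le> N" for i by (simp add: abs_le_D1)
  then show ?thesis by (rule that)
qed

lemma gain_op_in_linf_plus:
  assumes s: "s \<in> linf_plus"
  shows "gain_op Ii gam mu s \<in> linf_plus"
proof -
  obtain B where "0 \<le> B" and B: "\<And>i j r. j \<in> Ii i \<Longrightarrow> 0 \<le> r \<Longrightarrow> r \<le> supnorm s \<Longrightarrow> gam i j r \<le> B"
    using gam_bounded[OF supnorm_nonneg[OF s]] by blast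
  obtain N where N: "\<And>i. real_of_ereal (mu i (restr (\<lambda>_. B) (Ii i))) \<le> N"
    using mu_restr_const_bounded[OF \<open>0 \<le> B\<close>] by blast
  show ?thesis
  proof (rule linf_plusI)
    show "0 \<le> gain_op Ii gam mu s i" for i by (rule gain_op_nonneg[OF s])
    show "gain_op Ii gam mu s i \<le> N" for i
    proof -
      have "gain_op Ii gam mu s i \<le> real_of_ereal (mu i (restr (\<lambda>_. B) (Ii i)))"
        unfolding gain_op_eq
        using linf_plus_nonneg[OF s] linf_plus_le_supnorm[OF s]
        by (intro mu_restr_mono) (auto simp: gam_nonneg B)
      then show ?thesis using N[of i] by linarith
    qed
  qed
qed

lemma gain_op_tendsto:
  assumes x: "\<And>n. x n \<in> linf_plus" and s: "s \<in> linf_plus"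
    and lim: "\<And>j. (\<lambda>n. x n j) \<longlonglongrightarrow> s j"
  shows "(\<lambda>n. gain_op Ii gam mu (x n) i) \<longlonglongrightarrow> gain_op Ii gam mu s i"
  unfolding gain_op_eq
proof (rule tendstoI)
  fix \<epsilon> :: real assume "0 < \<epsilon>"
  let ?arg = "\<lambda>s. restr (\<lambda>j. gam i j (s j)) (Ii i)"
  have arg_linf: "?arg t \<in> linf_plus" if "t \<in> linf_plus" for t
    using linf_plus_nonneg[OF that] by (intro restr_Ii_in_linf_plus) (simp add: gam_nonneg)
  have arg_vanishes: "\<forall>j. j \<notin> Ii i \<longrightarrow> ?arg t j = 0" for t
    by (simp add: restr_def)
  obtain \<delta> where "\<delta> > 0" and \<delta>: "\<forall>t\<in>linf_plus. (\<forall>j. j \<notin> Ii i \<longrightarrow> t j = 0) \<longrightarrow>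
      supnorm (\<lambda>k. t k - ?arg s k) < \<delta> \<longrightarrow>
      \<bar>real_of_ereal (mu i t) - real_of_ereal (mu i (?arg s))\<bar> < \<epsilon>"
    using mu_continuous[OF finite_Ii arg_linf[OF s] arg_vanishes \<open>0 < \<epsilon>\<close>] by blast
  have "\<forall>\<^sub>F n in sequentially. dist (gam i j (x n j)) (gam i j (s j)) < \<delta> / 2" if "j \<in> Ii i" for j
  proof (rule tendstoD[OF continuous_on_tendsto_compose[OF
          class_Kinf_continuous_on[OF gam_class_Kinf[OF that]] lim]])
    show "s j \<in> {0..}" using linf_plus_nonneg[OF s] by simp
    show "\<forall>\<^sub>F n in sequentially. x n j \<in> {0..}" using linf_plus_nonneg[OF x] by simp
  qed (use \<open>\<delta> > 0\<close> in simp)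
  then have "\<forall>\<^sub>F n in sequentially. \<forall>j\<in>Ii i. dist (gam i j (x n j)) (gam i j (s j)) < \<delta> / 2"
    by (intro eventually_ball_finite finite_Ii) blast
  then show "\<forall>\<^sub>F n in sequentially.
      dist (real_of_ereal (mu i (?arg (x n)))) (real_of_ereal (mu i (?arg s))) < \<epsilon>"
  proof (rule eventually_mono)
    fix n assume close: "\<forall>j\<in>Ii i. dist (gam i j (x n j)) (gam i j (s j)) < \<delta> / 2"
    have "supnorm (\<lambda>k. ?arg (x n) k - ?arg s k) \<le> \<delta> / 2"
      using close \<open>\<delta> > 0\<close> by (intro supnorm_le) (auto simp: restr_def dist_real_def)
    then show "dist (real_of_ereal (mu i (?arg (x n)))) (real_of_ereal (mu i (?arg s))) < \<epsilon>"
      using \<delta> arg_linf[OF x] arg_vanishes \<open>\<delta> > 0\<close> by (simp add: dist_real_def)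
  qed
qed

end

theorem proposition2p13:
  fixes Ii :: "'i::countable \<Rightarrow> 'i set"
    and gam :: "'i \<Rightarrow> 'i \<Rightarrow> real \<Rightarrow> real"
    and mu :: "'i \<Rightarrow> ('i \<Rightarrow> real) \<Rightarrow> ereal"
  assumes "gain_data Ii gam mu"
  defines "\<Gamma> \<equiv> gain_op Ii gam mu"
  shows "(UGS (\<lambda>s. vmax s (\<Gamma> s)) \<longleftrightarrow>
            (\<exists>\<sigma>. bounded_Psi_path \<Gamma> \<sigma> \<and> increasing_path \<sigma>))
       \<and> ((\<exists>\<sigma>. bounded_Psi_path \<Gamma> \<sigma> \<and> increasing_path \<sigma>) \<longleftrightarrow>
            (\<exists>\<sigma>. bounded_Psi_path \<Gamma> \<sigma>))
       \<and> ((\<exists>\<sigma>. bounded_Psi_path \<Gamma> \<sigma>) \<longleftrightarrow> unif_cofinal (Psi \<Gamma>))"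
proof -
  interpret gain_operator Ii gam mu
    using assms(1) by (rule gain_operator.intro)
  have mono: "\<And>s t. s \<in> linf_plus \<Longrightarrow> t \<in> linf_plus \<Longrightarrow> vle s t \<Longrightarrow> vle (\<Gamma> s) (\<Gamma> t)"
    unfolding \<Gamma>_def by (rule gain_op_mono)
  have "UGS (\<lambda>s. vmax s (\<Gamma> s)) \<Longrightarrow> unif_cofinal (Psi \<Gamma>)"
    unfolding \<Gamma>_def by (rule UGS_imp_unif_cofinal_Psi[OF gain_op_in_linf_plus gain_op_tendsto])
  moreover have "unif_cofinal (Psi \<Gamma>) \<Longrightarrow> UGS (\<lambda>s. vmax s (\<Gamma> s))"
    by (rule unif_cofinal_Psi_imp_UGS[OF mono])
  moreover have "unif_cofinal (Psi \<Gamma>) \<Longrightarrow> \<exists>\<sigma>. bounded_Psi_path \<Gamma> \<sigma>"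
    by (rule unif_cofinal_imp_Psi_path)
  moreover have "bounded_Psi_path \<Gamma> \<sigma> \<Longrightarrow> unif_cofinal (Psi \<Gamma>)" for \<sigma>
    by (rule Psi_path_imp_unif_cofinal)
  moreover have "bounded_Psi_path \<Gamma> \<sigma> \<Longrightarrow> \<exists>\<tau>. bounded_Psi_path \<Gamma> \<tau> \<and> increasing_path \<tau>" for \<sigma>
    by (rule Psi_path_imp_increasing_Psi_path[OF mono])
  ultimately show ?thesis by blast
qed

end
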